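(* Let $w\ge5$, $t\in[2,w-2]$ and $\tilde h>2w^3$ be integers, and let $n'=\tilde h(w-1)$. Let $\{a_0=0,a_1,\dots,a_{w-2}\}$ be a $(\tilde h,w-1)$ modular Golomb ruler, with each $a_s$ represented by an integer in $[0,\tilde h-1]$. Define vectors in $\{0,1,2\}^{\mathbb Z_{n'}}$ (positions indexed by $\mathbb Z_{n'}$, all arithmetic mod $n'$) as follows. (1) For $i\in[0,t-2]$ and $j\in[0,\tilde h-1]$, $\mathbf a_{i,j}$ has support $\{(a_s+j)(w-1)+i: s\in[0,w-2]\}$, with position $(a_{w-2}+j)(w-1)+i$ having value $2$ and all other support positions value $1$. (2) For $i\in[0,w-t-1]$ and $j\in[0,\tilde h-1]$, $\mathbf b_{i,j}$ has support $\{(si+j)(w-1)+s-1: s\in[1,w-1]\}$, with position $((t+i)i+j)(w-1)+(t+i-1)$ having value $2$ and all other support positions value $1$. Let $\mathcal H=\{\mathbf a_{i,j}\}\cup\{\mathbf b_{i,j}\}$. Then $\mathcal H$ is an $(n',2w-2,w)_3$ code. Moreover, exactly $\tilde h(w-t)$ positions $v\in\mathbb Z_{n'}$ lie in the supports of exactly $w-t$ codewords of $\mathcal H$, and every other position lies in the supports of exactly $2w-t-1$ codewords of $\mathcal H$.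
   Context: An $(m,k)$ modular Golomb ruler is a set of $k$ elements of $\mathbb Z_m$ whose pairwise differences $a_i-a_j$ ($i\ne j$) in $\mathbb Z_m$ are nonzero and pairwise distinct. The $\ell_1$-distance between ternary vectors $u,v$ is $\sum|u_i-v_i|$ and the $\ell_1$-weight of $u$ is its distance to $0$. An $(n,d,w)_3$ code is a set of ternary vectors of length $n$ each of $\ell_1$-weight $w$ with pairwise $\ell_1$-distance at least $d$ (here length $n'$ with positions indexed by $\mathbb Z_{n'}$). *)

theory Defs
  imports Main
begin

text \<open>Elements of Z_m are represented by their canonical integer representatives in {0..<m}.
  Ternary vectors of length n (positions indexed by Z_n) are functions int => int,
  meaningful on positions {0..<n} and zero elsewhere.\<close>

definition mod_golomb_ruler :: "int \<Rightarrow> int \<Rightarrow> int set \<Rightarrow> bool" where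
  "mod_golomb_ruler m k A \<longleftrightarrow>
     A \<subseteq> {0..<m} \<and> card A = nat k \<and>
     (\<forall>x\<in>A. \<forall>y\<in>A. \<forall>u\<in>A. \<forall>v\<in>A. x \<noteq> y \<longrightarrow> u \<noteq> v \<longrightarrow>
        (x - y) mod m \<noteq> 0 \<and> ((x - y) mod m = (u - v) mod m \<longrightarrow> x = u \<and> y = v))"

definition l1_dist :: "int \<Rightarrow> (int \<Rightarrow> int) \<Rightarrow> (int \<Rightarrow> int) \<Rightarrow> int" where
  "l1_dist n u v = (\<Sum>p\<in>{0..<n}. \<bar>u p - v p\<bar>)"

definition l1_weight :: "int \<Rightarrow> (int \<Rightarrow> int) \<Rightarrow> int" where
  "l1_weight n u = l1_dist n u (\<lambda>_. 0)"

definition ternary_code :: "int \<Rightarrow> int \<Rightarrow> int \<Rightarrow> (int \<Rightarrow> int) set \<Rightarrow> bool" where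
  "ternary_code n d w C \<longleftrightarrow>
     (\<forall>c\<in>C. (\<forall>p. c p \<in> {0, 1, 2}) \<and> (\<forall>p. p \<notin> {0..<n} \<longrightarrow> c p = 0) \<and> l1_weight n c = w) \<and>
     (\<forall>c\<in>C. \<forall>c'\<in>C. c \<noteq> c' \<longrightarrow> l1_dist n c c' \<ge> d)"

definition supp_vec :: "int \<Rightarrow> (int \<Rightarrow> int) \<Rightarrow> int set" where
  "supp_vec n c = {p \<in> {0..<n}. c p \<noteq> 0}"

definition vec_a :: "int \<Rightarrow> int \<Rightarrow> (int \<Rightarrow> int) \<Rightarrow> int \<Rightarrow> int \<Rightarrow> int \<Rightarrow> int" where
  "vec_a n w a i j p =
     (if p = ((a (w - 2) + j) * (w - 1) + i) mod n then 2
      else if p \<in> {((a s + j) * (w - 1) + i) mod n | s. 0 \<le> s \<and> s \<le> w - 2} then 1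
      else 0)"

definition vec_b :: "int \<Rightarrow> int \<Rightarrow> int \<Rightarrow> int \<Rightarrow> int \<Rightarrow> int \<Rightarrow> int" where
  "vec_b n w t i j p =
     (if p = (((t + i) * i + j) * (w - 1) + (t + i - 1)) mod n then 2
      else if p \<in> {((s * i + j) * (w - 1) + s - 1) mod n | s. 1 \<le> s \<and> s \<le> w - 1} then 1
      else 0)"

end

theory Submission
  imports Defs
begin

text \<open>Lay out the positions \<open>0..<h(w - 1)\<close> as an array with \<open>h\<close> rows and \<open>w - 1\<close> columns,
  position \<open>x(w - 1) + r\<close> being row \<open>x\<close>, column \<open>r\<close>. Every codeword is the indicator of a
  \<open>(w - 1)\<close>-set with one entry (its tip) raised to 2, so two codewords are at distance at least
  \<open>2w - 2\<close> as soon as their supports share at most one position and their tips differ.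
  The word a_{i,j} is a translate of the ruler placed in column \<open>i \<le> t - 2\<close>; two translates meet
  twice only if a difference of the ruler occurs twice. The word b_{i,j} is the line of slope \<open>i\<close>
  through row \<open>j\<close>, meeting every column once; two lines meet at most once because \<open>h > w\<^sup>2\<close>
  rules out wrap-around. Counting, a position in column \<open>r\<close> lies on exactly \<open>w - t\<close> lines, and
  on \<open>w - 1\<close> ruler translates if \<open>r \<le> t - 2\<close>, on none otherwise.\<close>

definition tip_vec :: "int set \<Rightarrow> int \<Rightarrow> int \<Rightarrow> int" where
  "tip_vec P p0 p = (if p = p0 then 2 else if p \<in> P then 1 else 0)"

lemma tip_vec_eq_of_bool:
  "p0 \<in> P \<Longrightarrow> tip_vec P p0 p = of_bool (p \<in> P) + of_bool (p = p0)"
  by (simp add: tip_vec_def)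

lemma supp_vec_tip_vec: "P \<subseteq> {0..<n} \<Longrightarrow> p0 \<in> P \<Longrightarrow> supp_vec n (tip_vec P p0) = P"
  by (auto simp: tip_vec_def supp_vec_def)

lemma tip_vec_eq_imp_tip_eq:
  assumes "tip_vec P p0 = tip_vec Q q0"
  shows "p0 = q0"
proof -
  have "tip_vec Q q0 p0 = 2"
    unfolding assms[symmetric] by (simp add: tip_vec_def)
  then show ?thesis by (simp add: tip_vec_def split: if_splits)
qed

lemma sum_of_bool_mem:
  "finite A \<Longrightarrow> B \<subseteq> A \<Longrightarrow> (\<Sum>x\<in>A. of_bool (x \<in> B)) = (of_nat (card B) :: 'a::comm_semiring_1)"
  by (simp add: Int_absorb1)

lemma sum_tip_vec:
  assumes "P \<subseteq> {0..<n}" "p0 \<in> P"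
  shows "(\<Sum>p\<in>{0..<n}. tip_vec P p0 p) = int (card P) + 1"
proof -
  have "(\<Sum>p\<in>{0..<n}. tip_vec P p0 p) = (\<Sum>p\<in>{0..<n}. of_bool (p \<in> P) + of_bool (p \<in> {p0}))"
    using assms(2) by (simp add: tip_vec_eq_of_bool)
  also have "\<dots> = int (card P) + 1"
    using assms by (simp only: sum.distrib sum_of_bool_mem finite_atLeastLessThan_int) auto
  finally show ?thesis .
qed

lemma l1_weight_tip_vec:
  "P \<subseteq> {0..<n} \<Longrightarrow> p0 \<in> P \<Longrightarrow> l1_weight n (tip_vec P p0) = int (card P) + 1"
  unfolding l1_weight_def l1_dist_def by (simp add: tip_vec_def flip: sum_tip_vec)

lemma l1_dist_tip_vec_ge:
  assumes "P \<subseteq> {0..<n}" "p0 \<in> P" "Q \<subseteq> {0..<n}" "q0 \<in> Q"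
    and "card (P \<inter> Q) \<le> 1" "p0 \<noteq> q0"
  shows "int (card P) + int (card Q) \<le> l1_dist n (tip_vec P p0) (tip_vec Q q0)"
proof -
  let ?u = "tip_vec P p0" and ?v = "tip_vec Q q0"
  \<comment> \<open>on \<open>P \<inter> Q\<close> the smaller of the two entries is 1, since the tips differ\<close>
  have "?u p + ?v p - 2 * of_bool (p \<in> P \<inter> Q) \<le> \<bar>?u p - ?v p\<bar>" for p
    using assms(2,4,6) by (auto simp: tip_vec_def)
  then have "(\<Sum>p\<in>{0..<n}. ?u p + ?v p - 2 * of_bool (p \<in> P \<inter> Q)) \<le> l1_dist n ?u ?v"
    unfolding l1_dist_def by (rule sum_mono)
  moreover have "(\<Sum>p\<in>{0..<n}. ?u p + ?v p - 2 * of_bool (p \<in> P \<inter> Q))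
      = (int (card P) + 1) + (int (card Q) + 1) - 2 * int (card (P \<inter> Q))"
    by (simp only: sum.distrib sum_subtractf sum_tip_vec[OF assms(1,2)] sum_tip_vec[OF assms(3,4)]
        flip: sum_distrib_left) (use assms(1) in \<open>auto intro!: arg_cong[where f = card]\<close>)
  ultimately show ?thesis
    using assms(5) by linarith
qed

lemma ternary_code_tip_vec_family:
  assumes shape: "\<And>q. q \<in> I \<Longrightarrow> S q \<subseteq> {0..<n} \<and> p q \<in> S q \<and> int (card (S q)) = k"
    and tips: "inj_on p I"
    and apart: "\<And>q q'. q \<in> I \<Longrightarrow> q' \<in> I \<Longrightarrow> q \<noteq> q' \<Longrightarrow> card (S q \<inter> S q') \<le> 1"
  shows "ternary_code n (2 * k) (k + 1) ((\<lambda>q. tip_vec (S q) (p q)) ` I)"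
  unfolding ternary_code_def
proof (intro conjI ballI allI impI)
  fix c x assume "c \<in> (\<lambda>q. tip_vec (S q) (p q)) ` I"
  then obtain q where q: "q \<in> I" "c = tip_vec (S q) (p q)" by blast
  show "c x \<in> {0, 1, 2}" using q(2) by (simp add: tip_vec_def)
  show "x \<notin> {0..<n} \<Longrightarrow> c x = 0" using q shape[OF q(1)] by (auto simp: tip_vec_def)
  show "l1_weight n c = k + 1" using q shape[OF q(1)] by (simp add: l1_weight_tip_vec)
next
  fix c c' assume "c \<in> (\<lambda>q. tip_vec (S q) (p q)) ` I" "c' \<in> (\<lambda>q. tip_vec (S q) (p q)) ` I" "c \<noteq> c'"
  then obtain q q' where "q \<in> I" "q' \<in> I" "q \<noteq> q'"
    and "c = tip_vec (S q) (p q)" "c' = tip_vec (S q') (p q')" by blast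
  then show "2 * k \<le> l1_dist n c c'"
    using l1_dist_tip_vec_ge[of "S q" n "p q" "S q'" "p q'"] shape apart inj_onD[OF tips] by force
qed

lemma card_tip_vec_family_containing:
  assumes shape: "\<And>q. q \<in> I \<Longrightarrow> S q \<subseteq> {0..<n} \<and> p q \<in> S q"
    and tips: "inj_on p I"
  shows "card {c \<in> (\<lambda>q. tip_vec (S q) (p q)) ` I. v \<in> supp_vec n c} = card {q \<in> I. v \<in> S q}"
proof -
  have "inj_on (\<lambda>q. tip_vec (S q) (p q)) I"
    using tips by (auto simp: inj_on_def dest: tip_vec_eq_imp_tip_eq)
  moreover have "{c \<in> (\<lambda>q. tip_vec (S q) (p q)) ` I. v \<in> supp_vec n c}
      = (\<lambda>q. tip_vec (S q) (p q)) ` {q \<in> I. v \<in> S q}"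
    using shape by (auto simp: supp_vec_tip_vec)
  ultimately show ?thesis
    by (simp add: card_image inj_on_subset)
qed

lemma mult_add_eq_iff:
  fixes x x' r r' m :: int
  assumes "0 \<le> r" "r < m" "0 \<le> r'" "r' < m"
  shows "x * m + r = x' * m + r' \<longleftrightarrow> x = x' \<and> r = r'"
proof
  assume eq: "x * m + r = x' * m + r'"
  have "(x * m + r) div m = x" "(x' * m + r') div m = x'" using assms by simp_all
  with eq have "x = x'" by simp
  with eq show "x = x' \<and> r = r'" by simp
qed simp

lemma dvd_diff_add_iff_eq_mod:
  fixes c j x h :: int
  assumes "0 \<le> j" "j < h"
  shows "h dvd x - (c + j) \<longleftrightarrow> j = (x - c) mod h"
proof -
  have "h dvd x - (c + j) \<longleftrightarrow> j mod h = (x - c) mod h"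
    by (simp add: mod_eq_dvd_iff dvd_diff_commute[of h x] algebra_simps)
  with assms show ?thesis by simp
qed

lemma card_mod_ge:
  fixes h m c :: int
  assumes "0 < m" "0 \<le> c" "c \<le> m"
  shows "card {v \<in> {0..<h * m}. c \<le> v mod m} = nat h * nat (m - c)"
proof -
  have "{v \<in> {0..<h * m}. c \<le> v mod m} = (\<lambda>(x, r). x * m + r) ` ({0..<h} \<times> {c..<m})"
  proof (intro equalityI subsetI)
    fix v assume v: "v \<in> {v \<in> {0..<h * m}. c \<le> v mod m}"
    have "v div m * m \<le> v" using assms(1) by (simp add: mult_div_mod_eq minus_mod_eq_div_mult [symmetric])
    with v have "v div m * m < h * m" by simp
    then have "v div m < h" using assms(1) by simp
    moreover have "0 \<le> v div m" using v assms(1) by (simp add: pos_imp_zdiv_nonneg_iff)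
    ultimately have "(v div m, v mod m) \<in> {0..<h} \<times> {c..<m}" using v assms(1) by simp
    then show "v \<in> (\<lambda>(x, r). x * m + r) ` ({0..<h} \<times> {c..<m})"
      by (rule rev_image_eqI) simp
  next
    fix v assume "v \<in> (\<lambda>(x, r). x * m + r) ` ({0..<h} \<times> {c..<m})"
    then obtain x r where xr: "v = x * m + r" "0 \<le> x" "x < h" "c \<le> r" "r < m" by auto
    have "x * m \<le> (h - 1) * m" using xr assms(1) by (intro mult_right_mono) auto
    then show "v \<in> {v \<in> {0..<h * m}. c \<le> v mod m}"
      using xr assms by (simp add: algebra_simps)
  qed
  moreover have "inj_on (\<lambda>(x, r). x * m + r) ({0..<h} \<times> {c..<m})"
    using assms by (auto intro!: inj_onI simp: mult_add_eq_iff)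
  ultimately show ?thesis by (simp add: card_image card_cartesian_product)
qed

lemma eq_if_dvd_diff:
  fixes j j' h :: int
  assumes "0 \<le> j" "j < h" "0 \<le> j'" "j' < h" "h dvd j - j'"
  shows "j = j'"
  using assms mod_eq_dvd_iff[of j h j'] by simp

lemma eq_0_if_dvd_abs_less:
  fixes z h :: int
  assumes "h dvd z" "\<bar>z\<bar> < h"
  shows "z = 0"
  using dvd_imp_le_int[OF _ assms(1)] assms(2) by linarith

lemma card_Int_image_le_1:
  assumes "finite S"
    and "\<And>s u s' u'. s \<in> S \<Longrightarrow> u \<in> U \<Longrightarrow> s' \<in> S \<Longrightarrow> u' \<in> U \<Longrightarrow>
           f s = g u \<Longrightarrow> f s' = g u' \<Longrightarrow> f s = f s'"
  shows "card (f ` S \<inter> g ` U) \<le> 1"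
  using assms by (subst One_nat_def, subst card_le_Suc0_iff_eq) auto

locale ruler_code =
  fixes w t h :: int and a :: "int \<Rightarrow> int"
  assumes t_ge_2: "2 \<le> t" and t_le: "t \<le> w - 2" and h_gt: "w * w < h"
    and ruler: "mod_golomb_ruler h (w - 1) (a ` {0..w - 2})"
begin

lemma h_pos: "0 < h"
  using h_gt zero_le_square[of w] by linarith

lemma a_range:
  assumes "s \<in> {0..w - 2}"
  shows "0 \<le> a s \<and> a s < h"
proof -
  have "a s \<in> {0..<h}"
    using conjunct1[OF ruler[unfolded mod_golomb_ruler_def]] assms by blast
  then show ?thesis by simp
qed

lemma a_inj: "inj_on a {0..w - 2}"
proof -
  have "card (a ` {0..w - 2}) = nat (w - 1)"
    using conjunct1[OF conjunct2[OF ruler[unfolded mod_golomb_ruler_def]]] .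
  also have "\<dots> = card {0..w - 2}" by simp
  finally show ?thesis by (simp add: inj_on_iff_eq_card)
qed

lemma a_eq_if_dvd:
  assumes "s \<in> {0..w - 2}" "s' \<in> {0..w - 2}" "h dvd a s - a s'"
  shows "s = s'"
proof -
  have "a s = a s'"
    using eq_if_dvd_diff a_range[OF assms(1)] a_range[OF assms(2)] assms(3) by blast
  then show ?thesis using a_inj assms(1,2) by (simp add: inj_on_eq_iff)
qed

lemma ruler_diff_unique:
  assumes "s1 \<in> {0..w - 2}" "s2 \<in> {0..w - 2}" "s3 \<in> {0..w - 2}" "s4 \<in> {0..w - 2}"
    and "a s1 \<noteq> a s2" "a s3 \<noteq> a s4" "h dvd (a s1 - a s2) - (a s3 - a s4)"
  shows "s1 = s3"
proof -
  have "(a s1 - a s2) mod h = (a s3 - a s4) mod h"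
    using assms(7) by (simp add: mod_eq_dvd_iff)
  then have "a s1 = a s3"
    using conjunct2[OF conjunct2[OF ruler[unfolded mod_golomb_ruler_def]],
        rule_format, of "a s1" "a s2" "a s3" "a s4"] assms(1-6)
    by blast
  then show ?thesis using a_inj assms(1,3) by (simp add: inj_on_eq_iff)
qed

definition cell :: "int \<Rightarrow> int \<Rightarrow> int" where
  "cell x r = x mod h * (w - 1) + r"

lemma cell_mod:
  assumes "0 \<le> r" "r < w - 1"
  shows "(x * (w - 1) + r) mod (h * (w - 1)) = cell x r"
proof -
  have "(x * (w - 1) + r) mod ((w - 1) * h)
      = (w - 1) * ((x * (w - 1) + r) div (w - 1) mod h) + (x * (w - 1) + r) mod (w - 1)"
    using h_pos by (intro zmod_zmult2_eq) simp
  then show ?thesis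
    using assms by (simp add: cell_def ac_simps)
qed

lemma cell_range:
  assumes "0 \<le> r" "r < w - 1"
  shows "cell x r \<in> {0..<h * (w - 1)}"
proof -
  have "x mod h * (w - 1) \<le> (h - 1) * (w - 1)"
    using h_pos assms by (intro mult_right_mono) auto
  moreover have "0 \<le> x mod h * (w - 1)"
    using h_pos assms by simp
  ultimately show ?thesis
    using assms h_pos by (simp add: cell_def algebra_simps)
qed

lemma cell_eq_iff:
  assumes "0 \<le> r" "r < w - 1" "0 \<le> r'" "r' < w - 1"
  shows "cell x r = cell x' r' \<longleftrightarrow> h dvd x - x' \<and> r = r'"
  using assms by (simp add: cell_def mult_add_eq_iff mod_eq_dvd_iff)

lemma cell_div_mod:
  assumes "v \<in> {0..<h * (w - 1)}"
  shows "cell (v div (w - 1)) (v mod (w - 1)) = v"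
proof -
  have "0 < w - 1" using t_ge_2 t_le by simp
  then have "cell (v div (w - 1)) (v mod (w - 1)) = v mod (h * (w - 1))"
    using cell_mod[of "v mod (w - 1)" "v div (w - 1)"] by (simp add: div_mult_mod_eq)
  also have "\<dots> = v" using assms by simp
  finally show ?thesis .
qed

definition index_a :: "(int \<times> int) set" where
  "index_a = {0..t - 2} \<times> {0..h - 1}"

definition index_b :: "(int \<times> int) set" where
  "index_b = {0..w - t - 1} \<times> {0..h - 1}"

definition supp_a :: "int \<times> int \<Rightarrow> int set" where
  "supp_a = (\<lambda>(i, j). (\<lambda>s. cell (a s + j) i) ` {0..w - 2})"

definition tip_a :: "int \<times> int \<Rightarrow> int" where
  "tip_a = (\<lambda>(i, j). cell (a (w - 2) + j) i)"

definition supp_b :: "int \<times> int \<Rightarrow> int set" where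
  "supp_b = (\<lambda>(i, j). (\<lambda>s. cell (s * i + j) (s - 1)) ` {1..w - 1})"

definition tip_b :: "int \<times> int \<Rightarrow> int" where
  "tip_b = (\<lambda>(i, j). cell ((t + i) * i + j) (t + i - 1))"

lemma vec_a_eq_tip_vec:
  assumes "(i, j) \<in> index_a"
  shows "vec_a (h * (w - 1)) w a i j = tip_vec (supp_a (i, j)) (tip_a (i, j))"
proof -
  have cell: "(x * (w - 1) + i) mod (h * (w - 1)) = cell x i" for x
    using assms t_le by (intro cell_mod) (auto simp: index_a_def)
  have supp: "{((a s + j) * (w - 1) + i) mod (h * (w - 1)) | s. 0 \<le> s \<and> s \<le> w - 2} = supp_a (i, j)"
    by (auto simp: supp_a_def cell)
  show ?thesis
    unfolding vec_a_def supp unfolding tip_vec_def tip_a_def cell by simp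
qed

lemma vec_b_eq_tip_vec:
  assumes "(i, j) \<in> index_b"
  shows "vec_b (h * (w - 1)) w t i j = tip_vec (supp_b (i, j)) (tip_b (i, j))"
proof -
  have cell: "(x * (w - 1) + s - 1) mod (h * (w - 1)) = cell x (s - 1)"
    if "1 \<le> s" "s \<le> w - 1" for x s
    using cell_mod[of "s - 1" x] that by (simp add: algebra_simps)
  have "{((s * i + j) * (w - 1) + s - 1) mod (h * (w - 1)) | s. 1 \<le> s \<and> s \<le> w - 1}
      = (\<lambda>s. ((s * i + j) * (w - 1) + s - 1) mod (h * (w - 1))) ` {1..w - 1}"
    by auto
  also have "\<dots> = supp_b (i, j)"
    unfolding supp_b_def by (auto intro!: image_cong simp: cell)
  finally have supp: "{((s * i + j) * (w - 1) + s - 1) mod (h * (w - 1)) | s. 1 \<le> s \<and> s \<le> w - 1}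
      = supp_b (i, j)" .
  have tip: "(((t + i) * i + j) * (w - 1) + (t + i - 1)) mod (h * (w - 1)) = tip_b (i, j)"
    using assms t_ge_2 cell[of "t + i" "(t + i) * i + j"] by (auto simp: index_b_def tip_b_def algebra_simps)
  show ?thesis
    unfolding vec_b_def supp tip tip_vec_def ..
qed

lemma supp_a_shape:
  assumes "(i, j) \<in> index_a"
  shows "supp_a (i, j) \<subseteq> {0..<h * (w - 1)} \<and> tip_a (i, j) \<in> supp_a (i, j)
    \<and> int (card (supp_a (i, j))) = w - 1"
proof -
  have i: "0 \<le> i" "i < w - 1" using assms t_le by (auto simp: index_a_def)
  have "inj_on (\<lambda>s. cell (a s + j) i) {0..w - 2}"
    using i by (auto intro!: inj_onI a_eq_if_dvd simp: cell_eq_iff)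
  then have "card (supp_a (i, j)) = card {0..w - 2}"
    by (simp add: supp_a_def card_image)
  moreover have "supp_a (i, j) \<subseteq> {0..<h * (w - 1)}"
    unfolding supp_a_def prod.case by (intro image_subsetI cell_range i)
  moreover have "w - 2 \<in> {0..w - 2}" using t_ge_2 t_le by simp
  ultimately show ?thesis
    by (auto simp: supp_a_def tip_a_def)
qed

lemma supp_b_shape:
  assumes "(i, j) \<in> index_b"
  shows "supp_b (i, j) \<subseteq> {0..<h * (w - 1)} \<and> tip_b (i, j) \<in> supp_b (i, j)
    \<and> int (card (supp_b (i, j))) = w - 1"
proof -
  have "inj_on (\<lambda>s. cell (s * i + j) (s - 1)) {1..w - 1}"
    by (auto intro!: inj_onI simp: cell_eq_iff)
  then have "card (supp_b (i, j)) = card {1..w - 1}"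
    by (simp add: supp_b_def card_image)
  moreover have "supp_b (i, j) \<subseteq> {0..<h * (w - 1)}"
    unfolding supp_b_def prod.case by (intro image_subsetI cell_range) auto
  moreover have "t + i \<in> {1..w - 1}" using assms t_ge_2 by (auto simp: index_b_def)
  ultimately show ?thesis
    by (auto simp: supp_b_def tip_b_def)
qed

lemma card_supp_a_Int_le_1:
  assumes "(i, j) \<in> index_a" "(i', j') \<in> index_a" "(i, j) \<noteq> (i', j')"
  shows "card (supp_a (i, j) \<inter> supp_a (i', j')) \<le> 1"
  unfolding supp_a_def prod.case
proof (rule card_Int_image_le_1)
  fix s u s' u'
  assume s: "s \<in> {0..w - 2}" "u \<in> {0..w - 2}" "s' \<in> {0..w - 2}" "u' \<in> {0..w - 2}"
    and eq: "cell (a s + j) i = cell (a u + j') i'" and eq': "cell (a s' + j) i = cell (a u' + j') i'"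
  have cols: "0 \<le> i" "i < w - 1" "0 \<le> i'" "i' < w - 1"
    using assms(1,2) t_le by (auto simp: index_a_def)
  have "i = i'" and d: "h dvd (a s + j) - (a u + j')"
    using eq cols by (simp_all add: cell_eq_iff)
  have d': "h dvd (a s' + j) - (a u' + j')"
    using eq' cols by (simp add: cell_eq_iff)
  have j: "\<not> h dvd j - j'"
    using eq_if_dvd_diff[of j h j'] assms \<open>i = i'\<close> by (auto simp: index_a_def)
  \<comment> \<open>\<open>a s - a u\<close> and \<open>a s' - a u'\<close> are both congruent to \<open>j' - j \<noteq> 0\<close>\<close>
  have "a s \<noteq> a u" using d j by auto
  moreover have "a s' \<noteq> a u'" using d' j by auto
  moreover have "h dvd (a s - a u) - (a s' - a u')"
    using dvd_diff[OF d d'] by (simp add: algebra_simps)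
  ultimately have "s = s'" using ruler_diff_unique s by blast
  then show "cell (a s + j) i = cell (a s' + j) i" by simp
qed simp

lemma card_supp_a_Int_supp_b_le_1:
  assumes "(i, j) \<in> index_a"
  shows "card (supp_a (i, j) \<inter> supp_b (i', j')) \<le> 1"
  unfolding supp_a_def supp_b_def prod.case
proof (rule card_Int_image_le_1)
  fix s u s' u'
  assume u: "u \<in> {1..w - 1}" "u' \<in> {1..w - 1}"
    and eq: "cell (a s + j) i = cell (u * i' + j') (u - 1)"
    and eq': "cell (a s' + j) i = cell (u' * i' + j') (u' - 1)"
  have "0 \<le> i" "i < w - 1" using assms t_le by (auto simp: index_a_def)
  \<comment> \<open>\<open>supp_a (i, j)\<close> lies in column \<open>i\<close>, which \<open>supp_b (i', j')\<close> meets only once\<close>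
  then have "u = u'" using eq eq' u by (simp add: cell_eq_iff)
  then show "cell (a s + j) i = cell (a s' + j) i" using eq eq' by simp
qed simp

lemma card_supp_b_Int_le_1:
  assumes "(i, j) \<in> index_b" "(i', j') \<in> index_b" "(i, j) \<noteq> (i', j')"
  shows "card (supp_b (i, j) \<inter> supp_b (i', j')) \<le> 1"
  unfolding supp_b_def prod.case
proof (rule card_Int_image_le_1)
  fix s u s' u'
  assume s: "s \<in> {1..w - 1}" "u \<in> {1..w - 1}" "s' \<in> {1..w - 1}" "u' \<in> {1..w - 1}"
    and eq: "cell (s * i + j) (s - 1) = cell (u * i' + j') (u - 1)"
    and eq': "cell (s' * i + j) (s' - 1) = cell (u' * i' + j') (u' - 1)"
  have d: "h dvd (s * i + j) - (s * i' + j')" and d': "h dvd (s' * i + j) - (s' * i' + j')"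
    using eq eq' s by (auto simp: cell_eq_iff)
  have "((s * i + j) - (s * i' + j')) - ((s' * i + j) - (s' * i' + j')) = (s - s') * (i - i')"
    by (simp add: algebra_simps)
  then have dvd: "h dvd (s - s') * (i - i')"
    using dvd_diff[OF d d'] by simp
  have "\<bar>s - s'\<bar> \<le> w" "\<bar>i - i'\<bar> \<le> w"
    using s assms(1,2) t_ge_2 by (auto simp: index_b_def)
  then have "\<bar>(s - s') * (i - i')\<bar> \<le> w * w"
    unfolding abs_mult by (intro mult_mono) auto
  \<comment> \<open>since \<open>h > w\<^sup>2\<close>, the congruence \<open>(s - s')(i - i') \<equiv> 0\<close> holds over the integers\<close>
  with dvd h_gt have "(s - s') * (i - i') = 0"
    by (intro eq_0_if_dvd_abs_less) auto
  moreover have "i \<noteq> i'"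
    using d eq_if_dvd_diff[of j h j'] assms by (auto simp: index_b_def)
  ultimately show "cell (s * i + j) (s - 1) = cell (s' * i + j) (s' - 1)" by simp
qed simp

lemma inj_on_tip_a: "inj_on tip_a index_a"
proof (rule inj_onI, clarify)
  fix i j i' j' assume q: "(i, j) \<in> index_a" "(i', j') \<in> index_a" and eq: "tip_a (i, j) = tip_a (i', j')"
  then have "i = i'" "h dvd j - j'"
    using t_le by (auto simp: tip_a_def index_a_def cell_eq_iff)
  then show "i = i' \<and> j = j'"
    using eq_if_dvd_diff[of j h j'] q by (auto simp: index_a_def)
qed

lemma inj_on_tip_b: "inj_on tip_b index_b"
proof (rule inj_onI, clarify)
  fix i j i' j' assume q: "(i, j) \<in> index_b" "(i', j') \<in> index_b" and eq: "tip_b (i, j) = tip_b (i', j')"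
  then have "i = i'"
    using t_ge_2 by (auto simp: tip_b_def index_b_def cell_eq_iff)
  with eq q have "h dvd j - j'"
    using t_ge_2 by (auto simp: tip_b_def index_b_def cell_eq_iff)
  then show "i = i' \<and> j = j'"
    using \<open>i = i'\<close> eq_if_dvd_diff[of j h j'] q by (auto simp: index_b_def)
qed

lemma tip_a_ne_tip_b: "q \<in> index_a \<Longrightarrow> q' \<in> index_b \<Longrightarrow> tip_a q \<noteq> tip_b q'"
  using t_ge_2 t_le by (auto simp: tip_a_def tip_b_def index_a_def index_b_def cell_eq_iff)

definition index :: "(int \<times> int + int \<times> int) set" where
  "index = index_a <+> index_b"

definition supp :: "int \<times> int + int \<times> int \<Rightarrow> int set" where
  "supp = case_sum supp_a supp_b"

definition tip :: "int \<times> int + int \<times> int \<Rightarrow> int" where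
  "tip = case_sum tip_a tip_b"

definition code :: "(int \<Rightarrow> int) set" where
  "code = (\<lambda>q. tip_vec (supp q) (tip q)) ` index"

lemma code_eq:
  "{vec_a (h * (w - 1)) w a i j | i j. 0 \<le> i \<and> i \<le> t - 2 \<and> 0 \<le> j \<and> j \<le> h - 1}
   \<union> {vec_b (h * (w - 1)) w t i j | i j. 0 \<le> i \<and> i \<le> w - t - 1 \<and> 0 \<le> j \<and> j \<le> h - 1} = code"
proof -
  have "{vec_a (h * (w - 1)) w a i j | i j. 0 \<le> i \<and> i \<le> t - 2 \<and> 0 \<le> j \<and> j \<le> h - 1}
      = (\<lambda>(i, j). vec_a (h * (w - 1)) w a i j) ` index_a"
    unfolding index_a_def by force
  also have "\<dots> = (\<lambda>q. tip_vec (supp_a q) (tip_a q)) ` index_a"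
    by (rule image_cong) (auto simp: vec_a_eq_tip_vec)
  finally have A: "{vec_a (h * (w - 1)) w a i j | i j. 0 \<le> i \<and> i \<le> t - 2 \<and> 0 \<le> j \<and> j \<le> h - 1}
      = (\<lambda>q. tip_vec (supp_a q) (tip_a q)) ` index_a" .
  have "{vec_b (h * (w - 1)) w t i j | i j. 0 \<le> i \<and> i \<le> w - t - 1 \<and> 0 \<le> j \<and> j \<le> h - 1}
      = (\<lambda>(i, j). vec_b (h * (w - 1)) w t i j) ` index_b"
    unfolding index_b_def by force
  also have "\<dots> = (\<lambda>q. tip_vec (supp_b q) (tip_b q)) ` index_b"
    by (rule image_cong) (auto simp: vec_b_eq_tip_vec)
  finally show ?thesis
    unfolding A code_def index_def Plus_def image_Un image_image supp_def tip_def by simp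
qed

lemma index_cases:
  assumes "q \<in> index"
  obtains (A) i j where "q = Inl (i, j)" "(i, j) \<in> index_a"
    | (B) i j where "q = Inr (i, j)" "(i, j) \<in> index_b"
  using assms unfolding index_def by (cases q) auto

lemma supp_shape:
  assumes "q \<in> index"
  shows "supp q \<subseteq> {0..<h * (w - 1)} \<and> tip q \<in> supp q \<and> int (card (supp q)) = w - 1"
  using assms by (cases rule: index_cases) (simp_all add: supp_def tip_def supp_a_shape supp_b_shape)

lemma inj_on_tip: "inj_on tip index"
proof (rule inj_onI)
  fix q q' assume q: "q \<in> index" and q': "q' \<in> index" and eq: "tip q = tip q'"
  from q q' show "q = q'"
  proof (cases rule: index_cases[case_product index_cases])
    case (A_A i j i' j')
    then show ?thesis using eq inj_on_tip_a by (simp add: tip_def inj_on_eq_iff)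
  next
    case (A_B i j i' j')
    then show ?thesis using eq tip_a_ne_tip_b by (simp add: tip_def)
  next
    case (B_A i j i' j')
    then show ?thesis using eq tip_a_ne_tip_b by (metis tip_def sum.case)
  next
    case (B_B i j i' j')
    then show ?thesis using eq inj_on_tip_b by (simp add: tip_def inj_on_eq_iff)
  qed
qed

lemma card_supp_Int_le_1:
  assumes "q \<in> index" "q' \<in> index" "q \<noteq> q'"
  shows "card (supp q \<inter> supp q') \<le> 1"
  using assms(1,2)
proof (cases rule: index_cases[case_product index_cases])
  case (A_A i j i' j')
  then show ?thesis using assms(3) card_supp_a_Int_le_1 by (simp add: supp_def)
next
  case (A_B i j i' j')
  then show ?thesis using card_supp_a_Int_supp_b_le_1 by (simp add: supp_def)
next
  case (B_A i j i' j')
  then show ?thesis using card_supp_a_Int_supp_b_le_1 by (simp add: supp_def Int_commute)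
next
  case (B_B i j i' j')
  then show ?thesis using assms(3) card_supp_b_Int_le_1 by (simp add: supp_def)
qed

lemma ternary_code_code: "ternary_code (h * (w - 1)) (2 * w - 2) w code"
  using ternary_code_tip_vec_family[of index supp "h * (w - 1)" tip "w - 1", OF supp_shape inj_on_tip
      card_supp_Int_le_1]
  by (simp add: code_def algebra_simps)

lemma cell_in_supp_a_iff:
  assumes "(i, j) \<in> index_a" "0 \<le> r" "r < w - 1"
  shows "cell x r \<in> supp_a (i, j) \<longleftrightarrow> i = r \<and> j \<in> (\<lambda>s. (x - a s) mod h) ` {0..w - 2}"
proof -
  have "0 \<le> i" "i < w - 1" "0 \<le> j" "j < h"
    using assms(1) t_le by (auto simp: index_a_def)
  then have "cell x r \<in> supp_a (i, j) \<longleftrightarrow> (\<exists>s\<in>{0..w - 2}. h dvd x - (a s + j) \<and> r = i)"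
    unfolding supp_a_def prod.case image_iff using assms(2,3) by (simp add: cell_eq_iff)
  also have "\<dots> \<longleftrightarrow> i = r \<and> j \<in> (\<lambda>s. (x - a s) mod h) ` {0..w - 2}"
    using \<open>0 \<le> j\<close> \<open>j < h\<close> by (auto simp: dvd_diff_add_iff_eq_mod)
  finally show ?thesis .
qed

lemma cell_in_supp_b_iff:
  assumes "(i, j) \<in> index_b" "0 \<le> r" "r < w - 1"
  shows "cell x r \<in> supp_b (i, j) \<longleftrightarrow> j = (x - (r + 1) * i) mod h"
proof -
  have "cell x r \<in> supp_b (i, j) \<longleftrightarrow> (\<exists>s\<in>{1..w - 1}. h dvd x - (s * i + j) \<and> r = s - 1)"
    unfolding supp_b_def prod.case image_iff using assms(2,3) by (simp add: cell_eq_iff)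
  also have "\<dots> \<longleftrightarrow> h dvd x - ((r + 1) * i + j)"
    using assms(2,3) by force
  also have "\<dots> \<longleftrightarrow> j = (x - (r + 1) * i) mod h"
    using assms(1) by (intro dvd_diff_add_iff_eq_mod) (auto simp: index_b_def)
  finally show ?thesis .
qed

lemma card_index_a_containing_cell:
  assumes "0 \<le> r" "r < w - 1"
  shows "card {q \<in> index_a. cell x r \<in> supp_a q} = (if r \<le> t - 2 then nat (w - 1) else 0)"
proof -
  have "{q \<in> index_a. cell x r \<in> supp_a q}
      = (if r \<le> t - 2 then {r} \<times> (\<lambda>s. (x - a s) mod h) ` {0..w - 2} else {})"
    using cell_in_supp_a_iff[OF _ assms] h_pos assms by (auto simp: index_a_def)
  moreover have "inj_on (\<lambda>s. (x - a s) mod h) {0..w - 2}"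
    by (rule inj_onI) (auto simp: mod_eq_dvd_iff intro: a_eq_if_dvd[symmetric])
  ultimately show ?thesis
    by (simp add: card_cartesian_product card_image)
qed

lemma card_index_b_containing_cell:
  assumes "0 \<le> r" "r < w - 1"
  shows "card {q \<in> index_b. cell x r \<in> supp_b q} = nat (w - t)"
proof -
  have "{q \<in> index_b. cell x r \<in> supp_b q} = (\<lambda>i. (i, (x - (r + 1) * i) mod h)) ` {0..w - t - 1}"
    using cell_in_supp_b_iff[OF _ assms] h_pos by (auto simp: index_b_def)
  moreover have "inj_on (\<lambda>i. (i, (x - (r + 1) * i) mod h)) {0..w - t - 1}"
    by (rule inj_onI) simp
  ultimately show ?thesis
    by (simp add: card_image)
qed

lemma card_index_containing_cell:
  assumes "0 \<le> r" "r < w - 1"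
  shows "card {q \<in> index. cell x r \<in> supp q} = (if r \<le> t - 2 then nat (w - 1) else 0) + nat (w - t)"
proof -
  have "{q \<in> index. cell x r \<in> supp q}
      = {q \<in> index_a. cell x r \<in> supp_a q} <+> {q \<in> index_b. cell x r \<in> supp_b q}"
    by (auto simp: index_def supp_def)
  moreover have "finite index_a" "finite index_b"
    by (simp_all add: index_a_def index_b_def)
  ultimately show ?thesis
    by (simp add: card_Plus card_index_a_containing_cell[OF assms] card_index_b_containing_cell[OF assms])
qed

lemma card_code_containing:
  assumes "v \<in> {0..<h * (w - 1)}"
  shows "card {c \<in> code. v \<in> supp_vec (h * (w - 1)) c}
    = (if v mod (w - 1) \<le> t - 2 then nat (w - 1) else 0) + nat (w - t)"
proof -
  have "card {c \<in> code. v \<in> supp_vec (h * (w - 1)) c} = card {q \<in> index. v \<in> supp q}"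
    unfolding code_def using supp_shape inj_on_tip by (intro card_tip_vec_family_containing) auto
  also have "\<dots> = card {q \<in> index. cell (v div (w - 1)) (v mod (w - 1)) \<in> supp q}"
    using cell_div_mod[OF assms] by simp
  also have "\<dots> = (if v mod (w - 1) \<le> t - 2 then nat (w - 1) else 0) + nat (w - t)"
    using t_ge_2 t_le by (intro card_index_containing_cell) auto
  finally show ?thesis .
qed

lemma card_positions_low_degree:
  "card {v \<in> {0..<h * (w - 1)}. card {c \<in> code. v \<in> supp_vec (h * (w - 1)) c} = nat (w - t)}
    = nat (h * (w - t))"
proof -
  have "{v \<in> {0..<h * (w - 1)}. card {c \<in> code. v \<in> supp_vec (h * (w - 1)) c} = nat (w - t)}
      = {v \<in> {0..<h * (w - 1)}. t - 1 \<le> v mod (w - 1)}"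
    using card_code_containing t_ge_2 t_le by (auto split: if_splits)
  also have "card \<dots> = nat h * nat (w - t)"
    using card_mod_ge[of "w - 1" "t - 1" h] t_ge_2 t_le by simp
  also have "\<dots> = nat (h * (w - t))"
    using h_pos by (simp add: nat_mult_distrib)
  finally show ?thesis .
qed

lemma degree_high_if_not_low:
  assumes "v \<in> {0..<h * (w - 1)}"
    and "card {c \<in> code. v \<in> supp_vec (h * (w - 1)) c} \<noteq> nat (w - t)"
  shows "card {c \<in> code. v \<in> supp_vec (h * (w - 1)) c} = nat (2 * w - t - 1)"
  using assms card_code_containing[OF assms(1)] t_le by (auto split: if_splits)

end

theorem proposition1:
  fixes w t h :: int and a :: "int \<Rightarrow> int"
  assumes "w \<ge> 5" and "2 \<le> t" and "t \<le> w - 2" and "h > 2 * w ^ 3"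
    and "mod_golomb_ruler h (w - 1) (a ` {0..w - 2})"
    and "a 0 = 0"
    and "\<forall>s\<in>{0..w - 2}. 0 \<le> a s \<and> a s \<le> h - 1"
  shows "let n' = h * (w - 1);
             H = {vec_a n' w a i j | i j. 0 \<le> i \<and> i \<le> t - 2 \<and> 0 \<le> j \<and> j \<le> h - 1}
               \<union> {vec_b n' w t i j | i j. 0 \<le> i \<and> i \<le> w - t - 1 \<and> 0 \<le> j \<and> j \<le> h - 1};
             deg = (\<lambda>v. card {c \<in> H. v \<in> supp_vec n' c})
         in ternary_code n' (2 * w - 2) w H \<and>
            card {v \<in> {0..<n'}. deg v = nat (w - t)} = nat (h * (w - t)) \<and>
            (\<forall>v\<in>{0..<n'}. deg v \<noteq> nat (w - t) \<longrightarrow> deg v = nat (2 * w - t - 1))"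
proof -
  have "w * w * 1 \<le> w * w * w"
    using assms(1) by (intro mult_left_mono) auto
  then have "w * w < h"
    using assms(4) zero_le_square[of w] unfolding power3_eq_cube by linarith
  then interpret ruler_code w t h a
    using assms(2,3,5) by unfold_locales
  show ?thesis
    unfolding Let_def code_eq using ternary_code_code card_positions_low_degree degree_high_if_not_low by blast
qed

end
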